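(* Under the setting of the context, let $f^*=\min\{\|F_2\|_1 : S\in\mathbb{R}^{k\times n},\,F_2\in\mathbb{R}^{m\times n},\,A_2=QS+F_2\}$. Then there is a constant $C\ge0$ such that $f^*-\|F_2^{(k)}\|_1\le \frac{C}{\mu_k}$ for all $k=1,2,\dots$.
   Context: For a matrix $X$, $\|X\|_1=\sum_{i,j}|X_{ij}|$, $\|X\|_\infty=\max_{i,j}|X_{ij}|$, $\|X\|_F$ the Frobenius norm, $\langle Y,X\rangle=\mathrm{Trace}(Y^\top X)$. The shrinkage operator $\mathcal{S}_\tau$ acts entrywise by $\mathcal{S}_\tau(x)=\mathrm{sign}(x)\max\{|x|-\tau,0\}$. Augmented Lagrangian: $L(S,F_2,Y,\mu)=\|F_2\|_1+\langle Y,A_2-QS-F_2\rangle+\frac{\mu}{2}\|A_2-QS-F_2\|_F^2$, with $A_2\in\mathbb{R}^{m\times n}$, $A_2\ne0$, $Q\in\mathbb{R}^{m\times k}$, $Q^\top Q=I_k$, $\mu_0>0$, $\rho>1$, and $S^{(0)},F_2^{(0)}$ arbitrary. ALM iteration: $Y^{(0)}=A_2/\|A_2\|_\infty$, and for $k\ge0$: $S^{(k+1)}=Q^\top(A_2-F_2^{(k)}+\frac{1}{\mu_k}Y^{(k)})$, $F_2^{(k+1)}=\mathcal{S}_{1/\mu_k}(A_2-QS^{(k+1)}+\frac{1}{\mu_k}Y^{(k)})$, $Y^{(k+1)}=Y^{(k)}+\mu_k(A_2-QS^{(k+1)}-F_2^{(k+1)})$, $\mu_{k+1}=\rho\mu_k$.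 *)

theory Defs
  imports "HOL-Analysis.Analysis"
begin

text \<open>Matrices are rendered as real^'c^'r (rows indexed by 'r, columns by 'c).\<close>

definition ent_l1 :: "real^'c^'r \<Rightarrow> real" where
  "ent_l1 X = (\<Sum>i\<in>UNIV. \<Sum>j\<in>UNIV. \<bar>X $ i $ j\<bar>)"

definition ent_max :: "real^'c^'r \<Rightarrow> real" where
  "ent_max X = Max {\<bar>X $ i $ j\<bar> | i j. True}"

definition shrink :: "real \<Rightarrow> real \<Rightarrow> real" where
  "shrink \<tau> x = sgn x * max (\<bar>x\<bar> - \<tau>) 0"

definition shrinkM :: "real \<Rightarrow> real^'c^'r \<Rightarrow> real^'c^'r" where
  "shrinkM \<tau> X = (\<chi> i j. shrink \<tau> (X $ i $ j))"

definition fstar :: "real^'n^'m \<Rightarrow> real^'p^'m \<Rightarrow> real" where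
  "fstar A2 Q = Inf {ent_l1 F | (S :: real^'n^'p) F. A2 = Q ** S + F}"

end

theory Submission
  imports Defs
begin

text \<open>Each multiplier Y(k+1) is mu_k times a shrinkage residual, whose entries lie in
  [-1/mu_k, 1/mu_k]; so all multipliers are bounded in the entrywise l1 norm by some M.
  The primal residual A2 - Q S(k) - F2(k) equals (Y(k) - Y(k-1)) / mu_(k-1), of l1 norm at most
  2 M rho / mu_k. As A2 - Q S(k) is feasible for the problem defining f*, the triangle inequality
  gives the claim.\<close>

lemma ent_l1_nonneg: "ent_l1 X \<ge> 0"
  unfolding ent_l1_def by (intro sum_nonneg) auto

lemma ent_l1_triangle: "ent_l1 (X + Y) \<le> ent_l1 X + ent_l1 Y"
  unfolding ent_l1_def sum.distrib[symmetric]
  by (intro sum_mono) (auto intro: abs_triangle_ineq)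

lemma ent_l1_diff_le: "ent_l1 (X - Y) \<le> ent_l1 X + ent_l1 Y"
  unfolding ent_l1_def sum.distrib[symmetric]
  by (intro sum_mono) (auto intro: abs_triangle_ineq4)

lemma ent_l1_scaleR: "ent_l1 (c *\<^sub>R X) = \<bar>c\<bar> * ent_l1 X"
  unfolding ent_l1_def by (simp add: sum_distrib_left abs_mult)

lemma ent_l1_le_card:
  assumes "\<And>i j. \<bar>(X::real^'c^'r) $ i $ j\<bar> \<le> c"
  shows "ent_l1 X \<le> real (CARD('r) * CARD('c)) * c"
proof -
  have "ent_l1 X \<le> (\<Sum>i\<in>(UNIV::'r set). \<Sum>j\<in>(UNIV::'c set). c)"
    unfolding ent_l1_def by (intro sum_mono) (use assms in auto)
  thus ?thesis by simp
qed

lemma abs_diff_shrink_le: "0 \<le> \<tau> \<Longrightarrow> \<bar>x - shrink \<tau> x\<bar> \<le> \<tau>"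
  unfolding shrink_def by (cases "x > 0"; cases "x < 0"; auto simp: sgn_if max_def)

lemma multiplier_update_bounded:
  fixes R Y :: "real^'c^'r"
  assumes "\<mu> > 0"
  shows "\<bar>(Y + \<mu> *\<^sub>R (R - shrinkM (1/\<mu>) (R + (1/\<mu>) *\<^sub>R Y))) $ i $ j\<bar> \<le> 1"
proof -
  define x where "x = R $ i $ j + Y $ i $ j / \<mu>"
  have "(Y + \<mu> *\<^sub>R (R - shrinkM (1/\<mu>) (R + (1/\<mu>) *\<^sub>R Y))) $ i $ j
      = \<mu> * (x - shrink (1/\<mu>) x)"
    using assms unfolding x_def shrinkM_def by (simp add: field_simps)
  also have "\<bar>\<dots>\<bar> \<le> \<mu> * (1/\<mu>)"
    using assms abs_diff_shrink_le[of "1/\<mu>" x] by (simp add: abs_mult pos_le_divide_eq mult.commute)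
  finally show ?thesis using assms by simp
qed

lemma fstar_le_ent_l1: "fstar A2 Q \<le> ent_l1 (A2 - Q ** S)"
proof -
  have "ent_l1 (A2 - Q ** S) \<in> {ent_l1 F | S F. A2 = Q ** S + F}"
    by force
  then show ?thesis
    unfolding fstar_def by (rule cInf_lower) (auto intro!: bdd_belowI[of _ 0] ent_l1_nonneg)
qed

lemma fstar_diff_le_residual: "fstar A2 Q - ent_l1 F \<le> ent_l1 (A2 - Q ** S - F)"
  using fstar_le_ent_l1[of A2 Q S] ent_l1_triangle[of F "A2 - Q ** S - F"] by simp

theorem mainTheorem4:
  fixes A2 :: "real^'n^'m" and Q :: "real^'p^'m" and mu0 rho :: real
    and S :: "nat \<Rightarrow> real^'n^'p" and F2 :: "nat \<Rightarrow> real^'n^'m"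
    and Y :: "nat \<Rightarrow> real^'n^'m" and mu :: "nat \<Rightarrow> real"
  assumes "A2 \<noteq> 0"
    and "transpose Q ** Q = mat 1"
    and "mu0 > 0" and "rho > 1"
    and "Y 0 = (1 / ent_max A2) *\<^sub>R A2"
    and "mu 0 = mu0"
    and "\<And>k. S (Suc k) = transpose Q ** (A2 - F2 k + (1 / mu k) *\<^sub>R Y k)"
    and "\<And>k. F2 (Suc k) = shrinkM (1 / mu k) (A2 - Q ** S (Suc k) + (1 / mu k) *\<^sub>R Y k)"
    and "\<And>k. Y (Suc k) = Y k + mu k *\<^sub>R (A2 - Q ** S (Suc k) - F2 (Suc k))"
    and "\<And>k. mu (Suc k) = rho * mu k"
  shows "\<exists>C\<ge>0. \<forall>k\<ge>1. fstar A2 Q - ent_l1 (F2 k) \<le> C / mu k"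
proof -
  have mu_pos: "mu k > 0" for k
    by (induction k) (use assms(3,4,6,10) in auto)
  define M where "M = max (real (CARD('m) * CARD('n))) (ent_l1 (Y 0))"
  have Y_bounded: "ent_l1 (Y k) \<le> M" for k
  proof (cases k)
    case (Suc k')
    have "\<bar>Y k $ i $ j\<bar> \<le> 1" for i j
      using multiplier_update_bounded[OF mu_pos[of k'], where R = "A2 - Q ** S (Suc k')" and Y = "Y k'"]
      unfolding Suc assms(9) by (simp only: assms(8) diff_diff_eq)
    then show ?thesis unfolding M_def using ent_l1_le_card[of "Y k" 1] by simp
  qed (simp add: M_def)
  show ?thesis
  proof (intro exI[of _ "2 * M * rho"] conjI allI impI)
    show "0 \<le> 2 * M * rho"
      using ent_l1_nonneg[of "Y 0"] assms(4) by (simp add: M_def)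
    fix k :: nat assume "k \<ge> 1"
    then obtain k' where k: "k = Suc k'" by (cases k) auto
    have "A2 - Q ** S k - F2 k = (1 / mu k') *\<^sub>R (Y k - Y k')"
      using assms(9)[of k'] mu_pos[of k'] unfolding k by simp
    then have "ent_l1 (A2 - Q ** S k - F2 k) \<le> (1 / mu k') * (2 * M)"
      using ent_l1_diff_le[of "Y k" "Y k'"] Y_bounded[of k] Y_bounded[of k'] mu_pos[of k']
      by (simp add: ent_l1_scaleR divide_right_mono)
    also have "\<dots> = 2 * M * rho / mu k"
      using assms(10)[of k'] mu_pos[of k'] assms(4) unfolding k by (simp add: field_simps)
    finally show "fstar A2 Q - ent_l1 (F2 k) \<le> 2 * M * rho / mu k"
      using fstar_diff_le_residual[of A2 Q "F2 k" "S k"] by linarith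
  qed
qed

end
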